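(* Assume (FWW) for a flow $\Phi_t$ on $\mathbb{R}^n$ and a $k$-cone $C$. Let $K\subset\mathbb{R}^n$ be a compact invariant set and let $\mathbb{R}^n=E_y\oplus F_y$, $y\in K$, be a $k$-exponential separation of $(\Phi_t,D\Phi_t)$ along $K$ associated with $C$. Then there exists a constant $\delta'>0$ such that $$\{v\in\mathbb{R}^n:\ d(v,E_y\cap S)\le\delta'\}\subset \operatorname{Int}C\quad\text{for every }y\in K,$$ where $S=\{v\in\mathbb{R}^n:\|v\|=1\}$ and $d(v,B)=\inf_{w\in B}\|v-w\|$.
   Context: A closed set $C\subset\mathbb{R}^n$ is a $k$-cone if $lv\in C$ for all $v\in C$, $l\in\mathbb{R}$, and the maximal dimension of a linear subspace contained in $C$ is $k$. $C$ is $k$-solid if there is a $k$-dimensional subspace $W$ with $W\setminus\{0\}\subset\operatorname{Int}C$. Write $x\sim y$ if $x-y\in C$ and $x\approx y$ if $x-y\in\operatorname{Int}C$. A flow $\Phi_t$ is strongly monotone with respect to a $k$-solid cone $C$ if $x\sim y$ implies $\Phi_t(x)\sim\Phi_t(y)$ for $t\ge0$, and $x\ne y$, $x\sim y$ imply $\Phi_t(x)\approx\Phi_t(y)$ for $t>0$. Assumption (FWW): the flow $\Phi_t$ on $\mathbb{R}^n$ is $C^{1,\alpha}$-smooth (the map $(t,x)\mapsto\Phi_t(x)$ is $C^1$ with locally $\alpha$-Hölder derivative, $\alpha\in(0,1]$), strongly monotone with respect to the $k$-cone $C$, and $D_x\Phi_t(C\setminus\{0\})\subset\operatorname{Int}C$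 for all $t>0$ and $x$. A $k$-exponential separation along a compact invariant set $K$ associated with $C$ consists of a continuous (in the Grassmannian gap metric) family of $k$-dimensional subspaces $E_x$ and a continuous family of $(n-k)$-dimensional subspaces $F_x$, $x\in K$, such that: $\mathbb{R}^n=E_x\oplus F_x$; $D_x\Phi_tE_x=E_{\Phi_t(x)}$ and $D_x\Phi_tF_x\subset F_{\Phi_t(x)}$ for $t>0$; there are $M>0$, $0<\gamma<1$ with $\|D_x\Phi_tw\|\le M\gamma^t\|D_x\Phi_tv\|$ for all $x\in K$, unit $w\in F_x$, unit $v\in E_x$, $t\ge0$; and $E_x\subset\operatorname{Int}C\cup\{0\}$, $F_x\cap C=\{0\}$ for all $x\in K$. *)

theory Defs
  imports "HOL-Analysis.Analysis"
begin

text \<open>Ambient space: a Euclidean space 'a (isomorphic to R^n with n = DIM('a)).\<close>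

definition is_flow :: "(real \<Rightarrow> 'a \<Rightarrow> 'a) \<Rightarrow> bool" where
  "is_flow \<Phi> \<longleftrightarrow> (\<forall>x. \<Phi> 0 x = x) \<and> (\<forall>s t x. \<Phi> (s + t) x = \<Phi> s (\<Phi> t x))"

definition C1_alpha :: "(real \<Rightarrow> 'a::euclidean_space \<Rightarrow> 'a) \<Rightarrow> real \<Rightarrow> bool" where
  "C1_alpha \<Phi> \<alpha> \<longleftrightarrow> 0 < \<alpha> \<and> \<alpha> \<le> 1 \<and>
     (\<exists>D :: real \<times> 'a \<Rightarrow> (real \<times> 'a) \<Rightarrow>\<^sub>L 'a.
        (\<forall>p. ((\<lambda>(t, x). \<Phi> t x) has_derivative blinfun_apply (D p)) (at p)) \<and>
        continuous_on UNIV D \<and>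
        (\<forall>p. \<exists>r>0. \<exists>L. \<forall>q\<in>ball p r. \<forall>q'\<in>ball p r.
              norm (D q - D q') \<le> L * dist q q' powr \<alpha>))"

definition Dx :: "(real \<Rightarrow> 'a::real_normed_vector \<Rightarrow> 'a) \<Rightarrow> real \<Rightarrow> 'a \<Rightarrow> 'a \<Rightarrow> 'a" where
  "Dx \<Phi> t x = frechet_derivative (\<Phi> t) (at x)"

definition k_cone :: "nat \<Rightarrow> 'a::euclidean_space set \<Rightarrow> bool" where
  "k_cone k C \<longleftrightarrow> closed C \<and> (\<forall>v\<in>C. \<forall>l::real. l *\<^sub>R v \<in> C) \<and>
     (\<exists>W. subspace W \<and> W \<subseteq> C \<and> dim W = k) \<and>
     (\<forall>W. subspace W \<and> W \<subseteq> C \<longrightarrow> dim W \<le> k)"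

definition k_solid :: "nat \<Rightarrow> 'a::euclidean_space set \<Rightarrow> bool" where
  "k_solid k C \<longleftrightarrow> (\<exists>W. subspace W \<and> dim W = k \<and> W - {0} \<subseteq> interior C)"

definition strongly_monotone :: "(real \<Rightarrow> 'a::euclidean_space \<Rightarrow> 'a) \<Rightarrow> 'a set \<Rightarrow> bool" where
  "strongly_monotone \<Phi> C \<longleftrightarrow>
     (\<forall>x y t. x - y \<in> C \<and> t \<ge> 0 \<longrightarrow> \<Phi> t x - \<Phi> t y \<in> C) \<and>
     (\<forall>x y t. x \<noteq> y \<and> x - y \<in> C \<and> t > 0 \<longrightarrow> \<Phi> t x - \<Phi> t y \<in> interior C)"

text \<open>Assumption (FWW) with respect to a k-cone C (strong monotonicity presupposes
  that C is k-solid).\<close>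
definition FWW :: "(real \<Rightarrow> 'a::euclidean_space \<Rightarrow> 'a) \<Rightarrow> real \<Rightarrow> nat \<Rightarrow> 'a set \<Rightarrow> bool" where
  "FWW \<Phi> \<alpha> k C \<longleftrightarrow> is_flow \<Phi> \<and> C1_alpha \<Phi> \<alpha> \<and> k_cone k C \<and> k_solid k C \<and>
     strongly_monotone \<Phi> C \<and>
     (\<forall>t x. t > 0 \<longrightarrow> Dx \<Phi> t x ` (C - {0}) \<subseteq> interior C)"

definition half_gap :: "'a::real_normed_vector set \<Rightarrow> 'a set \<Rightarrow> real" where
  "half_gap U V = (if U \<inter> sphere 0 1 = {} then 0 else SUP u \<in> U \<inter> sphere 0 1. infdist u V)"

definition gap_dist :: "'a::real_normed_vector set \<Rightarrow> 'a set \<Rightarrow> real" where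
  "gap_dist U V = max (half_gap U V) (half_gap V U)"

definition gap_continuous_on :: "'a::metric_space set \<Rightarrow> ('a \<Rightarrow> 'b::real_normed_vector set) \<Rightarrow> bool" where
  "gap_continuous_on K E \<longleftrightarrow>
     (\<forall>y\<in>K. \<forall>e>0. \<exists>d>0. \<forall>z\<in>K. dist z y < d \<longrightarrow> gap_dist (E z) (E y) < e)"

definition invariant_set :: "(real \<Rightarrow> 'a \<Rightarrow> 'a) \<Rightarrow> 'a set \<Rightarrow> bool" where
  "invariant_set \<Phi> K \<longleftrightarrow> (\<forall>t. \<Phi> t ` K = K)"

definition exp_separation ::
  "(real \<Rightarrow> 'a::euclidean_space \<Rightarrow> 'a) \<Rightarrow> nat \<Rightarrow> 'a set \<Rightarrow> 'a set \<Rightarrow> ('a \<Rightarrow> 'a set) \<Rightarrow> ('a \<Rightarrow> 'a set) \<Rightarrow> bool" where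
  "exp_separation \<Phi> k C K E F \<longleftrightarrow>
     (\<forall>x\<in>K. subspace (E x) \<and> dim (E x) = k \<and> subspace (F x) \<and> dim (F x) = DIM('a) - k) \<and>
     gap_continuous_on K E \<and> gap_continuous_on K F \<and>
     (\<forall>x\<in>K. E x \<inter> F x = {0} \<and> {u + w | u w. u \<in> E x \<and> w \<in> F x} = UNIV) \<and>
     (\<forall>x\<in>K. \<forall>t>0. Dx \<Phi> t x ` E x = E (\<Phi> t x) \<and> Dx \<Phi> t x ` F x \<subseteq> F (\<Phi> t x)) \<and>
     (\<exists>M>0. \<exists>\<gamma>. 0 < \<gamma> \<and> \<gamma> < 1 \<and>
        (\<forall>x\<in>K. \<forall>w\<in>F x. \<forall>v\<in>E x. \<forall>t\<ge>0. norm w = 1 \<and> norm v = 1 \<longrightarrow>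
           norm (Dx \<Phi> t x w) \<le> M * \<gamma> powr t * norm (Dx \<Phi> t x v))) \<and>
     (\<forall>x\<in>K. E x \<subseteq> interior C \<union> {0} \<and> F x \<inter> C = {0})"

end

theory Submission
  imports Defs
begin

text \<open>The unit vectors of all the spaces E y, y in K, form a compact set U: continuity of E
  in the gap metric and compactness of K make U closed. U lies in the open set Int C, so a
  whole neighbourhood of fixed radius around U still lies in Int C. Of the hypotheses only
  the gap continuity of E and the inclusions E y \<subseteq> Int C \<union> {0} are needed.\<close>

lemma infdist_le_half_gap:
  fixes U V :: "'a::real_normed_vector set"
  assumes "u \<in> U" "norm u = 1" "0 \<in> V"
  shows "infdist u V \<le> half_gap U V"
proof -
  have u: "u \<in> U \<inter> sphere 0 1" using assms by auto
  have "bdd_above ((\<lambda>u. infdist u V) ` (U \<inter> sphere 0 1))"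
    using infdist_le[OF assms(3)] by (intro bdd_aboveI2[where M = 1]) (metis IntD2 dist_0_norm dist_commute mem_sphere)
  then have "infdist u V \<le> (SUP u \<in> U \<inter> sphere 0 1. infdist u V)"
    using u by (rule cSUP_upper2) simp
  then show ?thesis using u unfolding half_gap_def by auto
qed

lemma infdist_le_gap_dist:
  fixes U V :: "'a::real_normed_vector set"
  assumes "u \<in> U" "norm u = 1" "0 \<in> V"
  shows "infdist u V \<le> gap_dist U V"
  using infdist_le_half_gap[OF assms] unfolding gap_dist_def by simp

lemma gap_continuous_on_sequentially:
  assumes "gap_continuous_on K E" "z \<in> K" "\<And>n. y n \<in> K" "y \<longlonglongrightarrow> z" "e > 0"
  shows "\<forall>\<^sub>F n in sequentially. gap_dist (E (y n)) (E z) < e"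
proof -
  obtain d where "d > 0" and d: "\<And>w. w \<in> K \<Longrightarrow> dist w z < d \<Longrightarrow> gap_dist (E w) (E z) < e"
    using assms(1,2,5) unfolding gap_continuous_on_def by metis
  have "\<forall>\<^sub>F n in sequentially. dist (y n) z < d"
    using assms(4) \<open>d > 0\<close> by (rule tendstoD)
  then show ?thesis
    by eventually_elim (use d assms(3) in blast)
qed

lemma closed_unit_vectors_of_gap_continuous:
  fixes E :: "'a::metric_space \<Rightarrow> 'b::real_normed_vector set"
  assumes "compact K" "gap_continuous_on K E" "\<And>y. y \<in> K \<Longrightarrow> closed (E y) \<and> 0 \<in> E y"
  shows "closed (\<Union>y\<in>K. E y \<inter> sphere 0 1)"
  unfolding closed_sequential_limits
proof (intro allI impI)
  fix x l assume lim: "(\<forall>n. x n \<in> (\<Union>y\<in>K. E y \<inter> sphere 0 1)) \<and> x \<longlonglongrightarrow> l"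
  then obtain y where y: "\<And>n. y n \<in> K" "\<And>n. x n \<in> E (y n)" "\<And>n. norm (x n) = 1"
    by simp metis
  obtain z r where z: "z \<in> K" "strict_mono r" "(y \<circ> r) \<longlonglongrightarrow> z"
    using compact_imp_seq_compact[OF assms(1)] y(1) unfolding seq_compact_def by metis
  have "(\<lambda>n. infdist (x (r n)) (E z)) \<longlonglongrightarrow> 0"
  proof (rule LIMSEQ_I)
    fix e :: real assume "e > 0"
    have "\<forall>\<^sub>F n in sequentially. gap_dist (E (y (r n))) (E z) < e"
      using gap_continuous_on_sequentially[OF assms(2) z(1) _ z(3) \<open>e > 0\<close>] y(1) by simp
    moreover have "infdist (x (r n)) (E z) \<le> gap_dist (E (y (r n))) (E z)" for n
      using infdist_le_gap_dist y assms(3)[OF z(1)] by blast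
    ultimately show "\<exists>N. \<forall>n\<ge>N. norm (infdist (x (r n)) (E z) - 0) < e"
      unfolding eventually_sequentially by (metis diff_zero infdist_nonneg order.strict_trans1
          real_norm_def abs_of_nonneg)
  qed
  moreover have "(\<lambda>n. infdist (x (r n)) (E z)) \<longlonglongrightarrow> infdist l (E z)"
    using LIMSEQ_subseq_LIMSEQ[OF conjunct2[OF lim] z(2)] by (intro tendsto_infdist) (simp add: o_def)
  ultimately have "infdist l (E z) = 0"
    using LIMSEQ_unique by blast
  then have "l \<in> E z"
    using in_closed_iff_infdist_zero assms(3)[OF z(1)] by blast
  moreover have "norm l = 1"
    using tendsto_norm[OF conjunct2[OF lim]] y(3) by (simp add: LIMSEQ_const_iff)
  ultimately show "l \<in> (\<Union>y\<in>K. E y \<inter> sphere 0 1)"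
    using z(1) by auto
qed

lemma uniform_infdist_neighbourhood:
  fixes S T :: "'a::metric_space set"
  assumes "compact S" "open T" "S \<subseteq> T"
  obtains \<delta> where "\<delta> > 0" "\<And>A. A \<subseteq> S \<Longrightarrow> A \<noteq> {} \<Longrightarrow> {v. infdist v A \<le> \<delta>} \<subseteq> T"
proof -
  obtain e where "e > 0" and e: "(\<Union>x\<in>S. ball x e) \<subseteq> T"
    using compact_subset_open_imp_ball_epsilon_subset[OF assms] by blast
  have "{v. infdist v A \<le> e / 2} \<subseteq> T" if "A \<subseteq> S" "A \<noteq> {}" for A
  proof
    fix v assume "v \<in> {v. infdist v A \<le> e / 2}"
    then have "(INF a\<in>A. dist v a) < e"
      using \<open>e > 0\<close> infdist_notempty[OF \<open>A \<noteq> {}\<close>] by simp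
    then obtain w where "w \<in> A" "dist v w < e"
      using \<open>A \<noteq> {}\<close> by (metis cINF_less_iff bdd_below_image_dist)
    then show "v \<in> T"
      using e \<open>A \<subseteq> S\<close> by (force simp: dist_commute)
  qed
  then show ?thesis
    using that[of "e / 2"] \<open>e > 0\<close> by simp
qed

theorem lemma3p3:
  fixes \<Phi> :: "real \<Rightarrow> 'a::euclidean_space \<Rightarrow> 'a"
    and \<alpha> :: real and k :: nat and C K :: "'a set" and E F :: "'a \<Rightarrow> 'a set"
  assumes "FWW \<Phi> \<alpha> k C"
    and "compact K" and "invariant_set \<Phi> K"
    and "exp_separation \<Phi> k C K E F"
  shows "\<exists>\<delta>'>0. \<forall>y\<in>K.
           {v. E y \<inter> sphere 0 1 \<noteq> {} \<and> infdist v (E y \<inter> sphere 0 1) \<le> \<delta>'} \<subseteq> interior C"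
proof -
  have sub: "\<And>y. y \<in> K \<Longrightarrow> subspace (E y)"
    and gap: "gap_continuous_on K E"
    and cone: "\<And>y. y \<in> K \<Longrightarrow> E y \<subseteq> interior C \<union> {0}"
    using assms(4) unfolding exp_separation_def by auto
  define U where "U = (\<Union>y\<in>K. E y \<inter> sphere 0 1)"
  have "closed U"
    unfolding U_def using assms(2) gap sub
    by (intro closed_unit_vectors_of_gap_continuous) (auto intro: closed_subspace subspace_0)
  moreover have "bounded U"
    unfolding U_def by (rule bounded_subset[OF bounded_sphere[of 0 1]]) auto
  moreover have "U \<subseteq> interior C"
    using cone unfolding U_def by fastforce
  ultimately obtain \<delta> where "\<delta> > 0"
    and \<delta>: "\<And>A. A \<subseteq> U \<Longrightarrow> A \<noteq> {} \<Longrightarrow> {v. infdist v A \<le> \<delta>} \<subseteq> interior C"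
    using uniform_infdist_neighbourhood[OF _ open_interior] compact_eq_bounded_closed by metis
  have "E y \<inter> sphere 0 1 \<subseteq> U" if "y \<in> K" for y
    using that unfolding U_def by blast
  then show ?thesis
    using \<delta> \<open>\<delta> > 0\<close> by blast
qed

end
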